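(* Let $n\ge2$ and let $\mathcal C=X_1\cap\dots\cap X_n\subseteq\mathbb R^{n+1}$ be a tropical complete intersection curve. Then every vertex of $\mathcal C$ has valence 3, i.e. is contained in exactly three edges (bounded or unbounded) of $\mathcal C$.
   Context: Over $(\mathbb R,\max,+)$, a tropical polynomial is $f(x)=\max_{a\in\mathcal A}\{\lambda_a+a\cdot x\}$, $\mathcal A\subseteq\mathbb Z^{m}$ finite, $\lambda_a\in\mathbb R$; Newton polytope $\Delta_f=\operatorname{conv}(\mathcal A)$; lifted polytope $\tilde\Delta_f=\operatorname{conv}\{(a,t):a\in\mathcal A,t\le\lambda_a\}$, whose bounded faces project to a regular lattice subdivision $\operatorname{Subdiv}(f)$ of $\Delta_f$. $V_{tr}(f)$ is the non-linear locus of $f$, a polyhedral complex of pure dimension $m-1$, with a bijection $C\mapsto C^\vee$ from $k$-cells of $V_{tr}(f)$ to $(m-k)$-cells of $\operatorname{Subdiv}(f)$, $C^\vee=\operatorname{conv}\{a:\lambda_a+a\cdot x=f(x)\}$ for $x$ in the relative interior of $C$. $V_{tr}(f)$ is smooth if every maximal cell of $\operatorname{Subdiv}(f)$ is a lattice simplex of volume $1/m!$. For $X_i=V_{tr}(f_i)$, $i=1,\dots,n$, let $U=X_1\cup\dots\cup X_n=V_{tr}(f_1\odot\cdots\odot f_n)$ (the product polynomial has function $f_1+\dots+f_n$), and $\operatorname{Subdiv}_U=\operatorname{Subdiv}(f_1\odot\cdots\odot f_n)$. Since $\tilde\Delta_{f_1\odot\cdots\odot f_n}=\tilde\Delta_{f_1}+\dots+\tilde\Delta_{f_n}$,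 each bounded face decomposes uniquely as a Minkowski sum of bounded faces of the $\tilde\Delta_{f_i}$; projecting gives the privileged representation $\Lambda=\Lambda_1+\dots+\Lambda_n$ of each cell $\Lambda\in\operatorname{Subdiv}_U$, $\Lambda_i\in\operatorname{Subdiv}(f_i)$. Each cell $C$ of $I=X_1\cap\dots\cap X_n$ is uniquely $C_1\cap\dots\cap C_n$ with $C_i$ a cell of $X_i$ containing $C$ in its relative interior; $C$ is a cell of $U$ and $C^\vee\in\operatorname{Subdiv}_U$ has privileged representation $C_1^\vee+\dots+C_n^\vee$. The intersection is transversal if for all $J\subseteq\{1,\dots,n\}$, $|J|\ge2$, $\bigcap_{i\in J}X_i$ has dimension $m-|J|$ and every cell $C$ of it satisfies $\dim C^\vee=\sum_{i\in J}\dim C_i^\vee$ (duals w.r.t. $\bigcup_{i\in J}X_i$). A tropical complete intersection curve is a transversal intersection $\mathcal C=X_1\cap\dots\cap X_n$ of $n\ge 2$ smooth tropical hypersurfaces in $\mathbb R^{n+1}$ (so $m=n+1$); it is a one-dimensional polyhedral complex, some of whose edges are unbounded. *)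

theory Defs
  imports "HOL-Analysis.Analysis"
begin

text \<open>A tropical polynomial is given by its (finite, nonempty) support set of
  lattice exponents A and a coefficient function lambda (only its values on A matter).\<close>

type_synonym 'd tpoly = "(real^'d) set \<times> (real^'d \<Rightarrow> real)"

definition lattice_pt :: "real^'d \<Rightarrow> bool" where
  "lattice_pt a \<longleftrightarrow> (\<forall>j. a $ j \<in> \<int>)"

definition is_tpoly :: "('d::finite) tpoly \<Rightarrow> bool" where
  "is_tpoly f \<longleftrightarrow> finite (fst f) \<and> fst f \<noteq> {} \<and> (\<forall>a\<in>fst f. lattice_pt a)"

definition tval :: "('d::finite) tpoly \<Rightarrow> real^'d \<Rightarrow> real" where
  "tval f x = Max ((\<lambda>a. snd f a + a \<bullet> x) ` fst f)"

definition argmx :: "('d::finite) tpoly \<Rightarrow> real^'d \<Rightarrow> (real^'d) set" where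
  "argmx f x = {a \<in> fst f. snd f a + a \<bullet> x = tval f x}"

definition Vtr :: "('d::finite) tpoly \<Rightarrow> (real^'d) set" where
  "Vtr f = {x. \<not> (\<exists>e>0. \<exists>c w. \<forall>y\<in>ball x e. tval f y = c + w \<bullet> y)}"

text \<open>Cells of Subdiv(f): projections of bounded faces of the lifted polytope,
  i.e. conv{a : lambda_a + a.x = f(x)} for x in R^m.\<close>
definition subdiv :: "('d::finite) tpoly \<Rightarrow> (real^'d) set set" where
  "subdiv f = {convex hull (argmx f x) | x. True}"

definition smooth_tpoly :: "('d::finite) tpoly \<Rightarrow> bool" where
  "smooth_tpoly f \<longleftrightarrow>
     (\<forall>P\<in>subdiv f. (\<forall>Q\<in>subdiv f. P \<subseteq> Q \<longrightarrow> Q = P) \<longrightarrow>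
        (\<exists>S. finite S \<and> card S = CARD('d) + 1 \<and> (\<forall>a\<in>S. lattice_pt a) \<and>
             \<not> affine_dependent S \<and> P = convex hull S \<and>
             measure lebesgue P = 1 / fact CARD('d)))"

text \<open>Tropical product of the polynomials F i, i in J (its function is the sum).\<close>
definition tprod :: "(nat \<Rightarrow> ('d::finite) tpoly) \<Rightarrow> nat set \<Rightarrow> 'd tpoly" where
  "tprod F J =
     ((\<lambda>a. \<Sum>i\<in>J. a i) ` (PiE J (\<lambda>i. fst (F i))),
      (\<lambda>b. Max {\<Sum>i\<in>J. snd (F i) (a i) | a. a \<in> PiE J (\<lambda>i. fst (F i)) \<and> (\<Sum>i\<in>J. a i) = b}))"

definition tinter :: "(nat \<Rightarrow> ('d::finite) tpoly) \<Rightarrow> nat set \<Rightarrow> (real^'d) set" where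
  "tinter F J = (\<Inter>i\<in>J. Vtr (F i))"

text \<open>The cell of the intersection of the X_i (i in J) having x0 in its relative
  interior: C = C_1 \<inter> ... with C_i = {x : argmax_i(x0) \<subseteq> argmax_i(x)} the cell of X_i
  containing x0 in its relative interior.\<close>
definition icell :: "(nat \<Rightarrow> ('d::finite) tpoly) \<Rightarrow> nat set \<Rightarrow> real^'d \<Rightarrow> (real^'d) set" where
  "icell F J x0 = {x. \<forall>i\<in>J. argmx (F i) x0 \<subseteq> argmx (F i) x}"

definition icells :: "(nat \<Rightarrow> ('d::finite) tpoly) \<Rightarrow> nat set \<Rightarrow> (real^'d) set set" where
  "icells F J = icell F J ` tinter F J"

text \<open>Cells C of the
  intersection over J are parametrised by points x0 of their relative interiors;
  C^vee (dual w.r.t. the union, i.e. w.r.t. the product polynomial) is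
  conv(argmax of the product at x0), and C_i^vee = conv(argmax_i(x0)).\<close>
definition transversal :: "(nat \<Rightarrow> ('d::finite) tpoly) \<Rightarrow> nat \<Rightarrow> bool" where
  "transversal F n \<longleftrightarrow>
     (\<forall>J. J \<subseteq> {1..n} \<and> 2 \<le> card J \<longrightarrow>
        (\<exists>C\<in>icells F J. aff_dim C = int CARD('d) - int (card J)) \<and>
        (\<forall>C\<in>icells F J. aff_dim C \<le> int CARD('d) - int (card J)) \<and>
        (\<forall>x0\<in>tinter F J.
           aff_dim (convex hull (argmx (tprod F J) x0)) =
           (\<Sum>i\<in>J. aff_dim (convex hull (argmx (F i) x0)))))"

definition curve_vertices :: "(nat \<Rightarrow> ('d::finite) tpoly) \<Rightarrow> nat \<Rightarrow> (real^'d) set" where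
  "curve_vertices F n = {v. {v} \<in> icells F {1..n}}"

definition curve_edges :: "(nat \<Rightarrow> ('d::finite) tpoly) \<Rightarrow> nat \<Rightarrow> (real^'d) set set" where
  "curve_edges F n = {E \<in> icells F {1..n}. aff_dim E = 1}"

end

theory Submission
  imports Defs
begin

text \<open>At a vertex v of the curve let A_i be the set of exponents at which the maximum of
  f_i is attained at v. Each A_i has at least two elements, and it is affinely independent
  because it lies in a unimodular lattice simplex of Subdiv(f_i), whose only lattice points
  are its vertices. Since no cell of the intersection leaves v, the differences of
  elements of the A_i span R^(n+1), so the sum of the |A_i| - 1 is at least n + 1;
  transversality identifies this sum with the dimension of the dual cell of v, which is at
  most n + 1. Hence exactly one A_i0 has three elements and all the others have two.
  Moving away from v in a direction along which exactly one pair of A_i0 (and every other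
  A_i) stays maximal traces an edge, and every edge at v arises this way from one of the
  three pairs.\<close>


subsection \<open>Lattice points of unimodular simplices\<close>

lemma det_in_Ints:
  fixes A :: "real^'n^'n"
  assumes "\<forall>i j. A$i$j \<in> \<int>"
  shows "det A \<in> \<int>"
  unfolding det_def by (intro Ints_sum Ints_mult Ints_prod) (auto simp: assms)

lemma convex_combination_Ints_weights_mem:
  fixes X :: "'a::real_vector set"
  assumes fin: "finite X" and u: "\<forall>x\<in>X. u x \<in> \<int> \<and> 0 \<le> u x" and u1: "sum u X = 1"
  shows "(\<Sum>x\<in>X. u x *\<^sub>R x) \<in> X"
proof -
  obtain x where x: "x \<in> X" "u x \<noteq> 0"
    using u1 by (metis sum.neutral zero_neq_one)
  have "1 \<le> u x"
    using Ints_nonzero_abs_ge1[of "u x"] u x by auto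
  moreover have "sum u X = u x + sum u (X - {x})"
    using fin x by (simp add: sum.remove)
  moreover have "0 \<le> sum u (X - {x})"
    using u by (intro sum_nonneg) auto
  ultimately have "u x = 1" "sum u (X - {x}) = 0"
    using u1 by linarith+
  then have "\<forall>y\<in>X - {x}. u y = 0"
    using fin u by (subst (asm) sum_nonneg_eq_0_iff) auto
  then have "(\<Sum>y\<in>X. u y *\<^sub>R y) = x"
    using fin x \<open>u x = 1\<close> by (simp add: sum.remove)
  then show ?thesis
    using x by simp
qed

lemma Ints_vec_if_unimodular:
  fixes M :: "real^'n^'n"
  assumes M: "\<forall>i j. M $ i $ j \<in> \<int>" and det: "\<bar>det M\<bar> = 1"
    and Mc: "\<forall>i. (M *v c) $ i \<in> \<int>"
  shows "c $ k \<in> \<int>"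
proof -
  have "det (\<chi> i j. if j = k then (M *v c) $ i else M $ i $ j) \<in> \<int>"
    using M Mc by (intro det_in_Ints) auto
  moreover have "det M = 1 \<or> det M = -1"
    using det by auto
  ultimately show ?thesis
    using cramer_lemma[of k M c] by auto
qed

lemma lattice_point_in_simplex_det_one:
  fixes X :: "(real^'n) set" and f :: "'n \<Rightarrow> real^'n"
  assumes fin: "finite X" and x0: "x0 \<in> X" and bij: "bij_betw f UNIV (X - {x0})"
    and lat: "\<forall>a\<in>X. lattice_pt a"
    and det: "\<bar>det (\<chi> i j. f j $ i - x0 $ i)\<bar> = 1"
    and p: "p \<in> convex hull X" and lp: "lattice_pt p"
  shows "p \<in> X"
proof -
  define M where "M = ((\<chi> i j. f j $ i - x0 $ i) :: real^'n^'n)"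
  have fX: "f j \<in> X" for j
    using bij by (auto simp: bij_betw_def)
  obtain u where u0: "\<forall>x\<in>X. 0 \<le> u x" and u1: "sum u X = 1" and up: "(\<Sum>x\<in>X. u x *\<^sub>R x) = p"
    using p convex_hull_finite[OF fin] by auto
  define c where "c = ((\<chi> j. u (f j)) :: real^'n)"
  have "p - x0 = (\<Sum>x\<in>X. u x *\<^sub>R (x - x0))"
    using up u1 by (simp add: scaleR_diff_right sum_subtractf scaleR_sum_left[symmetric])
  also have "\<dots> = (\<Sum>x\<in>X - {x0}. u x *\<^sub>R (x - x0))"
    using fin x0 by (simp add: sum.remove)
  also have "\<dots> = (\<Sum>j\<in>UNIV. c $ j *\<^sub>R (f j - x0))"
    using sum.reindex_bij_betw[OF bij, of "\<lambda>x. u x *\<^sub>R (x - x0)"] by (simp add: c_def)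
  finally have Mc: "M *v c = p - x0"
    by (simp add: vec_eq_iff matrix_vector_mult_def M_def sum_component mult.commute)
  have c_Ints: "c $ k \<in> \<int>" for k
  proof (rule Ints_vec_if_unimodular)
    show "\<forall>i j. M $ i $ j \<in> \<int>"
      using lat x0 fX by (auto simp: M_def lattice_pt_def)
    show "\<bar>det M\<bar> = 1"
      using det by (simp add: M_def)
    show "\<forall>i. (M *v c) $ i \<in> \<int>"
      using lat lp x0 by (auto simp: Mc lattice_pt_def)
  qed
  have "sum u (X - {x0}) = (\<Sum>j\<in>UNIV. c $ j)"
    using sum.reindex_bij_betw[OF bij, of u] by (simp add: c_def)
  then have "u x0 = 1 - (\<Sum>j\<in>UNIV. c $ j)"
    using fin x0 u1 by (simp add: sum.remove)
  have "u x \<in> \<int>" if "x \<in> X" for x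
  proof (cases "x = x0")
    case True
    then show ?thesis
      using \<open>u x0 = 1 - (\<Sum>j\<in>UNIV. c $ j)\<close> c_Ints by (simp add: Ints_diff Ints_sum)
  next
    case False
    then have "x \<in> range f"
      using that bij by (simp add: bij_betw_def)
    then obtain k where "x = f k"
      by blast
    then show ?thesis
      using c_Ints[of k] by (simp add: c_def)
  qed
  then have "(\<Sum>x\<in>X. u x *\<^sub>R x) \<in> X"
    using fin u0 u1 by (intro convex_combination_Ints_weights_mem) auto
  then show ?thesis
    using up by simp
qed

lemma lattice_point_in_unimodular_simplex_wellorder:
  fixes X :: "(real^'n::{finite,wellorder}) set"
  assumes fin: "finite X" and cX: "card X = Suc CARD('n)" and lat: "\<forall>a\<in>X. lattice_pt a"
    and meas: "measure lebesgue (convex hull X) = 1 / fact CARD('n)"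
    and p: "p \<in> convex hull X" and lp: "lattice_pt p"
  shows "p \<in> X"
proof -
  obtain x0 where x0: "x0 \<in> X"
    using cX by fastforce
  have "card (X - {x0}) = card (UNIV :: 'n set)"
    using cX x0 fin by simp
  then obtain f where bij: "bij_betw f (UNIV :: 'n set) (X - {x0})"
    using finite_same_card_bij[of "UNIV :: 'n set" "X - {x0}"] fin by auto
  have "convex hull X \<in> sets lborel"
    using finite_imp_compact_convex_hull[OF fin] by (auto dest: compact_imp_closed)
  then have "measure lebesgue (convex hull X) = measure lborel (convex hull X)"
    by simp
  then have "\<bar>det (\<chi> i j. f j $ i - x0 $ i)\<bar> = 1"
    using meas content_simplex[OF fin cX x0 bij] by (simp add: field_simps)
  then show ?thesis
    using lattice_point_in_simplex_det_one[OF fin x0 bij lat _ p lp] by simp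
qed

text \<open>The volume formula content_simplex is stated only for well-ordered index types; the
  general case is transported to a well-ordered copy of the index type along the coordinate
  relabelling vec_to_copy, which preserves lattice points, convex hulls and Lebesgue
  measure.\<close>

typedef 'a wo_copy = "UNIV :: 'a set"
  morphisms from_copy to_copy by auto

lemma from_to_copy [simp]: "from_copy (to_copy y) = y" "to_copy (from_copy x) = x"
  by (simp_all add: to_copy_inverse from_copy_inverse)

instance wo_copy :: (finite) finite
proof
  have "(UNIV :: 'a wo_copy set) = to_copy ` UNIV"
    by (metis from_to_copy(2) surj_def)
  then show "finite (UNIV :: 'a wo_copy set)"
    by (metis finite finite_imageI)
qed

instantiation wo_copy :: (finite) linorder
begin
definition "a < b \<longleftrightarrow> to_nat (from_copy a) < to_nat (from_copy b)"
definition "a \<le> b \<longleftrightarrow> to_nat (from_copy a) \<le> to_nat (from_copy b)"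
instance
  by intro_classes (auto simp: less_eq_wo_copy_def less_wo_copy_def from_copy_inject)
end

instance wo_copy :: (finite) wellorder
proof -
  have "wf {(x :: 'a wo_copy, y). x < y}"
    by (auto simp: trancl_def tranclp_less intro!: finite_acyclic_wf acyclicI)
  then show "OFCLASS('a wo_copy, wellorder_class)"
    by (rule wf_wellorderI) intro_classes
qed

lemma card_wo_copy: "CARD('a::finite wo_copy) = CARD('a)"
proof -
  have "bij_betw to_copy (UNIV :: 'a set) (UNIV :: 'a wo_copy set)"
    by (rule bij_betw_byWitness[where f' = from_copy]) simp_all
  then show ?thesis
    by (simp add: bij_betw_same_card)
qed

definition vec_to_copy :: "real^'a::finite \<Rightarrow> real^'a wo_copy" where
  "vec_to_copy x = (\<chi> i. x $ from_copy i)"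

definition vec_from_copy :: "real^'a::finite wo_copy \<Rightarrow> real^'a" where
  "vec_from_copy y = (\<chi> j. y $ to_copy j)"

lemma vec_to_from_copy [simp]: "vec_to_copy (vec_from_copy y) = y" "vec_from_copy (vec_to_copy x) = x"
  by (simp_all add: vec_to_copy_def vec_from_copy_def vec_eq_iff)

lemma linear_vec_to_copy: "linear vec_to_copy"
  by (auto simp: linear_iff vec_to_copy_def vec_eq_iff)

lemma inj_vec_to_copy: "inj vec_to_copy"
  by (metis vec_to_from_copy(2) injI)

lemma borel_measurable_vec_to_copy [measurable]: "vec_to_copy \<in> borel \<rightarrow>\<^sub>M borel"
  by (intro borel_measurable_continuous_onI linear_continuous_on
      linear_conv_bounded_linear[THEN iffD1] linear_vec_to_copy)

lemma prod_Basis_vec: "(\<Prod>b\<in>Basis. (x::real^'n) \<bullet> b) = (\<Prod>i\<in>UNIV. x $ i)"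
proof -
  have B: "Basis = range (\<lambda>i. axis i (1::real) :: real^'n)"
    by (auto simp: Basis_vec_def)
  have "inj (\<lambda>i. axis i (1::real) :: real^'n)"
    by (auto simp: inj_def axis_eq_axis)
  then have "(\<Prod>b\<in>Basis. x \<bullet> b) = (\<Prod>i\<in>UNIV. x \<bullet> axis i 1)"
    unfolding B by (subst prod.reindex) simp_all
  then show ?thesis
    by (simp add: inner_axis)
qed

lemma lborel_eq_distr_vec_to_copy:
  "(lborel :: (real^'a::finite wo_copy) measure) = distr lborel borel vec_to_copy"
proof (rule lborel_eqI)
  fix l u :: "real^'a wo_copy"
  assume le: "\<And>b. b \<in> Basis \<Longrightarrow> l \<bullet> b \<le> u \<bullet> b"
  have "(\<forall>i. l $ i < x $ from_copy i \<and> x $ from_copy i < u $ i) \<longleftrightarrow>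
      (\<forall>j. l $ to_copy j < x $ j \<and> x $ j < u $ to_copy j)" for x :: "real^'a"
    by (metis from_to_copy)
  then have pre: "vec_to_copy -` box l u = box (vec_from_copy l) (vec_from_copy u)"
    by (auto simp: mem_box_cart vec_to_copy_def vec_from_copy_def)
  have "(\<Prod>j\<in>UNIV. u $ to_copy j - l $ to_copy j) = (\<Prod>i\<in>UNIV. u $ i - l $ i)"
    by (rule prod.reindex_bij_witness[where i = from_copy and j = to_copy]) simp_all
  then have vol: "(\<Prod>b\<in>Basis. (vec_from_copy u - vec_from_copy l) \<bullet> b) = (\<Prod>b\<in>Basis. (u - l) \<bullet> b)"
    by (simp add: prod_Basis_vec vec_from_copy_def)
  have "l \<bullet> axis (to_copy j) 1 \<le> u \<bullet> axis (to_copy j) 1" for j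
    by (rule le) (auto simp: Basis_vec_def)
  then have "vec_from_copy l $ j \<le> vec_from_copy u $ j" for j
    by (simp add: inner_axis vec_from_copy_def)
  then have "\<And>b. b \<in> Basis \<Longrightarrow> vec_from_copy l \<bullet> b \<le> vec_from_copy u \<bullet> b"
    by (auto simp: Basis_vec_def inner_axis)
  then show "emeasure (distr lborel borel vec_to_copy) (box l u) = (\<Prod>b\<in>Basis. (u - l) \<bullet> b)"
    using vol by (simp add: emeasure_distr pre prod_nonneg)
qed simp

lemma measure_vec_to_copy_image:
  fixes A :: "(real^'a::finite) set"
  assumes "compact A"
  shows "measure lebesgue (vec_to_copy ` A) = measure lebesgue A"
proof -
  have "compact (vec_to_copy ` A)"
    by (intro compact_continuous_image assms linear_continuous_on
        linear_conv_bounded_linear[THEN iffD1] linear_vec_to_copy)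
  then have B: "vec_to_copy ` A \<in> sets borel"
    by (auto dest: compact_imp_closed)
  have A: "A \<in> sets borel"
    using assms by (auto dest: compact_imp_closed)
  have pre: "vec_to_copy -` (vec_to_copy ` A) = A"
    using inj_vec_to_copy by (auto dest: injD)
  have "measure lebesgue (vec_to_copy ` A) = measure (distr lborel borel vec_to_copy) (vec_to_copy ` A)"
    using B by (simp add: lborel_eq_distr_vec_to_copy[symmetric])
  also have "\<dots> = measure lebesgue A"
    using A B by (simp add: measure_distr pre)
  finally show ?thesis .
qed

lemma lattice_point_in_unimodular_simplex:
  fixes S :: "(real^'d::finite) set"
  assumes fin: "finite S" and cS: "card S = CARD('d) + 1" and lat: "\<forall>a\<in>S. lattice_pt a"
    and meas: "measure lebesgue (convex hull S) = 1 / fact CARD('d)"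
    and p: "p \<in> convex hull S" and lp: "lattice_pt p"
  shows "p \<in> S"
proof -
  have hull: "convex hull (vec_to_copy ` S) = vec_to_copy ` (convex hull S)"
    by (rule convex_hull_linear_image[OF linear_vec_to_copy, symmetric])
  have "vec_to_copy p \<in> vec_to_copy ` S"
  proof (rule lattice_point_in_unimodular_simplex_wellorder)
    show "finite (vec_to_copy ` S)"
      using fin by simp
    show "card (vec_to_copy ` S) = Suc CARD('d wo_copy)"
      using cS by (simp add: card_wo_copy card_image[OF inj_on_subset[OF inj_vec_to_copy subset_UNIV]])
    show "\<forall>a\<in>vec_to_copy ` S. lattice_pt a" "lattice_pt (vec_to_copy p)"
      using lat lp by (auto simp: lattice_pt_def vec_to_copy_def)
    show "vec_to_copy p \<in> convex hull (vec_to_copy ` S)"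
      unfolding hull using p by blast
    show "measure lebesgue (convex hull (vec_to_copy ` S)) = 1 / fact CARD('d wo_copy)"
      unfolding hull card_wo_copy
      using measure_vec_to_copy_image[OF finite_imp_compact_convex_hull[OF fin]] meas by simp
  qed
  then show ?thesis
    using inj_vec_to_copy by (auto dest: injD)
qed


subsection \<open>Maximizing exponents of a tropical polynomial\<close>

definition maximizers :: "'a::real_inner set \<Rightarrow> 'a \<Rightarrow> 'a set" where
  "maximizers A u = {a \<in> A. \<forall>b\<in>A. b \<bullet> u \<le> a \<bullet> u}"

lemma maximizers_eq_self:
  assumes "\<forall>a\<in>A. \<forall>b\<in>A. a \<bullet> u = b \<bullet> u"
  shows "maximizers A u = A"
proof -
  have "\<forall>b\<in>A. b \<bullet> u \<le> a \<bullet> u" if "a \<in> A" for a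
    using assms that by (metis order_refl)
  then show ?thesis
    by (auto simp: maximizers_def)
qed

lemma maximizers_insert_below:
  assumes T: "\<forall>a\<in>T. a \<bullet> u = s \<bullet> u" and s: "s \<in> T" and t: "t \<bullet> u < s \<bullet> u"
  shows "maximizers (insert t T) u = T"
proof (intro set_eqI iffI)
  fix a
  assume "a \<in> maximizers (insert t T) u"
  then have "a \<in> insert t T" "s \<bullet> u \<le> a \<bullet> u"
    using s by (auto simp: maximizers_def)
  then show "a \<in> T"
    using t by auto
next
  fix a
  assume a: "a \<in> T"
  have "b \<bullet> u \<le> a \<bullet> u" if "b \<in> insert t T" for b
  proof (cases "b = t")
    case True
    then show ?thesis
      using t T a by simp
  next
    case False
    then show ?thesis
      using that T a by simp
  qed
  then show "a \<in> maximizers (insert t T) u"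
    using a by (simp add: maximizers_def)
qed

lemma tval_ge: "is_tpoly f \<Longrightarrow> a \<in> fst f \<Longrightarrow> snd f a + a \<bullet> x \<le> tval f x"
  unfolding tval_def is_tpoly_def by (intro Max_ge) auto

lemma argmx_nonempty: "is_tpoly f \<Longrightarrow> argmx f x \<noteq> {}"
proof -
  assume f: "is_tpoly f"
  then have "tval f x \<in> (\<lambda>a. snd f a + a \<bullet> x) ` fst f"
    unfolding tval_def is_tpoly_def by (intro Max_in) auto
  then show ?thesis
    by (auto simp: argmx_def)
qed

lemma finite_argmx: "is_tpoly f \<Longrightarrow> finite (argmx f x)"
  unfolding is_tpoly_def argmx_def by auto

lemma eventually_argmx_subset:
  assumes f: "is_tpoly f"
  shows "\<forall>\<^sub>F y in nhds x. argmx f y \<subseteq> argmx f x"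
proof -
  obtain b where b: "b \<in> argmx f x"
    using argmx_nonempty[OF f] by blast
  have "\<forall>\<^sub>F y in nhds x. snd f a + a \<bullet> y < snd f b + b \<bullet> y" if a: "a \<in> fst f - argmx f x" for a
  proof -
    have "open {y. snd f a + a \<bullet> y < snd f b + b \<bullet> y}"
      by (intro open_Collect_less continuous_intros)
    moreover have "snd f a + a \<bullet> x < snd f b + b \<bullet> x"
      using a b tval_ge[OF f, of a x] by (auto simp: argmx_def)
    ultimately show ?thesis
      using eventually_nhds_in_open by fastforce
  qed
  then have "\<forall>\<^sub>F y in nhds x. \<forall>a\<in>fst f - argmx f x. snd f a + a \<bullet> y < snd f b + b \<bullet> y"
    using f by (intro eventually_ball_finite) (auto simp: is_tpoly_def)
  then show ?thesis
  proof (rule eventually_mono)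
    fix y
    assume less: "\<forall>a\<in>fst f - argmx f x. snd f a + a \<bullet> y < snd f b + b \<bullet> y"
    show "argmx f y \<subseteq> argmx f x"
    proof
      fix a
      assume a: "a \<in> argmx f y"
      have "snd f b + b \<bullet> y \<le> snd f a + a \<bullet> y"
        using a b tval_ge[OF f, of b y] by (auto simp: argmx_def)
      show "a \<in> argmx f x"
      proof (rule ccontr)
        assume "a \<notin> argmx f x"
        moreover have "a \<in> fst f"
          using a by (simp add: argmx_def)
        ultimately have "snd f a + a \<bullet> y < snd f b + b \<bullet> y"
          using less by blast
        then show False
          using \<open>snd f b + b \<bullet> y \<le> snd f a + a \<bullet> y\<close> by linarith
      qed
    qed
  qed
qed

lemma eventually_argmx_along_ray:
  assumes f: "is_tpoly f"
  shows "\<forall>\<^sub>F t in at_right 0. argmx f (x + t *\<^sub>R u) = maximizers (argmx f x) u"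
proof -
  have "((\<lambda>t. x + t *\<^sub>R u) \<longlongrightarrow> x) (at_right 0)"
    by (auto intro!: tendsto_eq_intros)
  then have "\<forall>\<^sub>F t in at_right 0. argmx f (x + t *\<^sub>R u) \<subseteq> argmx f x"
    using eventually_argmx_subset[OF f] eventually_compose_filterlim by blast
  with eventually_at_right_less[of 0] show ?thesis
  proof eventually_elim
    case (elim t)
    let ?y = "x + t *\<^sub>R u"
    have val: "snd f a + a \<bullet> ?y = tval f x + t * (a \<bullet> u)" if "a \<in> argmx f x" for a
      using that by (simp add: argmx_def inner_add_right algebra_simps)
    obtain a0 where a0: "a0 \<in> argmx f ?y"
      using argmx_nonempty[OF f] by blast
    then have a0x: "a0 \<in> argmx f x"
      using elim by blast
    have tv: "tval f ?y = tval f x + t * (a0 \<bullet> u)"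
      using a0 val[OF a0x] by (simp add: argmx_def)
    show ?case
    proof (intro set_eqI iffI)
      fix a
      assume a: "a \<in> argmx f ?y"
      then have ax: "a \<in> argmx f x"
        using elim by blast
      have "b \<bullet> u \<le> a \<bullet> u" if b: "b \<in> argmx f x" for b
      proof -
        have "snd f b + b \<bullet> ?y \<le> snd f a + a \<bullet> ?y"
          using a b tval_ge[OF f, of b ?y] by (auto simp: argmx_def)
        then show ?thesis
          using val[OF b] val[OF ax] elim by simp
      qed
      then show "a \<in> maximizers (argmx f x) u"
        using ax by (simp add: maximizers_def)
    next
      fix a
      assume "a \<in> maximizers (argmx f x) u"
      then have ax: "a \<in> argmx f x" and "a0 \<bullet> u \<le> a \<bullet> u"
        using a0x by (auto simp: maximizers_def)
      then have "tval f ?y \<le> snd f a + a \<bullet> ?y"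
        using tv val[OF ax] elim by (simp add: mult_left_mono)
      then show "a \<in> argmx f ?y"
        using ax tval_ge[OF f, of a ?y] by (auto simp: argmx_def)
    qed
  qed
qed

lemma exists_argmx_along_ray:
  assumes J: "finite J" and tp: "\<And>i. i \<in> J \<Longrightarrow> is_tpoly (F i)"
  shows "\<exists>t>0. \<forall>i\<in>J. argmx (F i) (x + t *\<^sub>R u) = maximizers (argmx (F i) x) u"
proof -
  have "\<forall>\<^sub>F t in at_right 0. \<forall>i\<in>J. argmx (F i) (x + t *\<^sub>R u) = maximizers (argmx (F i) x) u"
    using eventually_argmx_along_ray[OF tp] by (intro eventually_ball_finite[OF J]) blast
  with eventually_at_right_less[of 0]
  have "\<forall>\<^sub>F t in at_right 0. 0 < t \<and> (\<forall>i\<in>J. argmx (F i) (x + t *\<^sub>R u) = maximizers (argmx (F i) x) u)"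
    by (rule eventually_conj)
  then show ?thesis
    using eventually_happens'[OF trivial_limit_at_right_real] by blast
qed

lemma inner_nonneg_on_ball_eq_0:
  fixes z :: "'a::real_inner"
  assumes e: "0 < e" and nonneg: "\<forall>y\<in>ball x e. 0 \<le> z \<bullet> (y - x)"
  shows "z = 0"
proof (rule ccontr)
  assume z: "z \<noteq> 0"
  define y where "y = x - (e / (2 * norm z)) *\<^sub>R z"
  have "dist x y = e / 2"
    using z e by (simp add: y_def dist_norm)
  then have "0 \<le> z \<bullet> (y - x)"
    using nonneg e by simp
  moreover have "z \<bullet> (y - x) = - (e / (2 * norm z)) * (z \<bullet> z)"
    by (simp add: y_def)
  moreover have "0 < (e / (2 * norm z)) * (z \<bullet> z)"
    using z e by simp
  ultimately show False
    by linarith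
qed

lemma argmx_subset_slope_if_affine:
  assumes f: "is_tpoly f" and e: "0 < e" and aff: "\<forall>y\<in>ball x e. tval f y = c + w \<bullet> y"
  shows "argmx f x \<subseteq> {w}"
proof
  fix a
  assume a: "a \<in> argmx f x"
  have "0 \<le> (w - a) \<bullet> (y - x)" if y: "y \<in> ball x e" for y
  proof -
    have "snd f a + a \<bullet> y \<le> c + w \<bullet> y"
      using aff y tval_ge[OF f, of a y] a by (auto simp: argmx_def)
    moreover have "snd f a + a \<bullet> x = c + w \<bullet> x"
      using aff e a by (auto simp: argmx_def)
    ultimately show ?thesis
      by (simp add: inner_diff_left inner_diff_right algebra_simps)
  qed
  then have "w - a = 0"
    using inner_nonneg_on_ball_eq_0[OF e, of x "w - a"] by blast
  then show "a \<in> {w}"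
    by simp
qed

lemma Vtr_iff_card_argmx:
  assumes f: "is_tpoly f"
  shows "x \<in> Vtr f \<longleftrightarrow> 2 \<le> card (argmx f x)"
proof
  assume V: "x \<in> Vtr f"
  show "2 \<le> card (argmx f x)"
  proof (rule ccontr)
    assume "\<not> 2 \<le> card (argmx f x)"
    moreover have "card (argmx f x) \<noteq> 0"
      using argmx_nonempty[OF f] finite_argmx[OF f] by simp
    ultimately have "card (argmx f x) = 1"
      by linarith
    then obtain a where A: "argmx f x = {a}"
      by (rule card_1_singletonE)
    obtain e where e: "e > 0" "\<forall>y. dist y x < e \<longrightarrow> argmx f y \<subseteq> {a}"
      using eventually_argmx_subset[OF f, of x] by (auto simp: A eventually_nhds_metric)
    have "tval f y = snd f a + a \<bullet> y" if "y \<in> ball x e" for y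
    proof -
      have "argmx f y = {a}"
        using e(2) that argmx_nonempty[OF f, of y] by (auto simp: dist_commute)
      then show ?thesis
        by (auto simp: argmx_def)
    qed
    with e(1) V show False
      unfolding Vtr_def by blast
  qed
next
  assume "2 \<le> card (argmx f x)"
  then have "\<not> card (argmx f x) \<le> Suc 0"
    by simp
  then have "\<not> (\<exists>w. argmx f x \<subseteq> {w})"
    using card_le_Suc0_iff_eq[OF finite_argmx[OF f]] by blast
  then show "x \<in> Vtr f"
    using argmx_subset_slope_if_affine[OF f] unfolding Vtr_def by blast
qed

lemma affine_independent_argmx:
  fixes f :: "'d::finite tpoly"
  assumes f: "is_tpoly f" and sm: "smooth_tpoly f"
  shows "\<not> affine_dependent (argmx f x)"
proof -
  have "subdiv f \<subseteq> (\<lambda>B. convex hull B) ` Pow (fst f)"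
    unfolding subdiv_def argmx_def by blast
  then have "finite (subdiv f)"
    using f unfolding is_tpoly_def by (meson finite_Pow_iff finite_imageI finite_subset)
  moreover have "convex hull (argmx f x) \<in> subdiv f"
    unfolding subdiv_def by blast
  ultimately obtain Q where Q: "Q \<in> subdiv f" "convex hull (argmx f x) \<subseteq> Q"
    and "\<forall>R\<in>subdiv f. Q \<subseteq> R \<longrightarrow> Q = R"
    using finite_has_maximal2 by blast
  then have "\<forall>R\<in>subdiv f. Q \<subseteq> R \<longrightarrow> R = Q"
    by auto
  then obtain S where S: "finite S" "card S = CARD('d) + 1" "\<forall>a\<in>S. lattice_pt a"
    "\<not> affine_dependent S" "Q = convex hull S" "measure lebesgue Q = 1 / fact CARD('d)"
    using sm Q(1) unfolding smooth_tpoly_def by blast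
  have "argmx f x \<subseteq> S"
  proof
    fix a
    assume a: "a \<in> argmx f x"
    have "a \<in> convex hull (argmx f x)"
      by (rule hull_inc[OF a])
    then have "a \<in> convex hull S"
      using Q(2) S(5) by blast
    moreover have "lattice_pt a"
      using a f unfolding is_tpoly_def argmx_def by blast
    moreover have "measure lebesgue (convex hull S) = 1 / fact CARD('d)"
      using S(5,6) by simp
    ultimately show "a \<in> S"
      using lattice_point_in_unimodular_simplex[OF S(1-3)] by blast
  qed
  then show ?thesis
    using affine_independent_subset S(4) by blast
qed


subsection \<open>Vertices of the intersection\<close>

lemma singleton_icellsD:
  assumes "{v} \<in> icells F J"
  shows "v \<in> tinter F J" "icell F J v = {v}"
proof -
  obtain x where x: "x \<in> tinter F J" "icell F J x = {v}"
    using assms by (auto simp: icells_def)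
  moreover have "x \<in> icell F J x"
    by (simp add: icell_def)
  ultimately show "v \<in> tinter F J" "icell F J v = {v}"
    by auto
qed

lemma exists_direction_constant_on:
  fixes A :: "'i \<Rightarrow> 'a::euclidean_space set"
  assumes J: "finite J" and fin: "\<forall>i\<in>J. finite (A i)"
    and small: "(\<Sum>i\<in>J. card (A i) - 1) < DIM('a)"
  shows "\<exists>z. z \<noteq> 0 \<and> (\<forall>i\<in>J. \<forall>a\<in>A i. \<forall>b\<in>A i. a \<bullet> z = b \<bullet> z)"
proof -
  define c where "c i = (SOME a. a \<in> A i)" for i
  define X where "X = (\<Union>i\<in>J. (\<lambda>a. a - c i) ` (A i - {c i}))"
  have "card X \<le> (\<Sum>i\<in>J. card ((\<lambda>a. a - c i) ` (A i - {c i})))"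
    unfolding X_def by (rule card_UN_le[OF J])
  also have "\<dots> \<le> (\<Sum>i\<in>J. card (A i) - 1)"
  proof (rule sum_mono)
    fix i
    assume "i \<in> J"
    have "card (A i - {c i}) = card (A i) - 1"
      using some_in_eq[of "A i"] by (cases "A i = {}") (auto simp: c_def)
    then show "card ((\<lambda>a. a - c i) ` (A i - {c i})) \<le> card (A i) - 1"
      using card_image_le[of "A i - {c i}"] fin \<open>i \<in> J\<close> by auto
  qed
  finally have "card X < DIM('a)"
    using small by linarith
  moreover have "finite X"
    unfolding X_def using J fin by auto
  ultimately have "span X \<noteq> UNIV"
    using dim_le_card[of UNIV X] by auto
  then obtain z where z: "z \<noteq> 0" "\<forall>x\<in>span X. z \<bullet> x = 0"
    using span_not_UNIV_orthogonal by blast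
  have "a \<bullet> z = c i \<bullet> z" if "i \<in> J" "a \<in> A i" for i a
  proof (cases "a = c i")
    case False
    then have "a - c i \<in> span X"
      using that by (auto simp: X_def intro: span_base)
    then have "z \<bullet> (a - c i) = 0"
      using z(2) by blast
    then show ?thesis
      by (simp add: inner_diff_right inner_commute[of z])
  qed simp
  then show ?thesis
    using z(1) by (intro exI[of _ z]) simp
qed

lemma constant_direction_at_vertex_eq_0:
  fixes F :: "nat \<Rightarrow> 'd::finite tpoly"
  assumes J: "finite J" and tp: "\<And>i. i \<in> J \<Longrightarrow> is_tpoly (F i)" and v: "icell F J v = {v}"
    and const: "\<forall>i\<in>J. \<forall>a\<in>argmx (F i) v. \<forall>b\<in>argmx (F i) v. a \<bullet> u = b \<bullet> u"
  shows "u = 0"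
proof -
  obtain t where t: "t > 0" "\<forall>i\<in>J. argmx (F i) (v + t *\<^sub>R u) = maximizers (argmx (F i) v) u"
    using exists_argmx_along_ray[where F = F, OF J tp] by blast
  have "maximizers (argmx (F i) v) u = argmx (F i) v" if "i \<in> J" for i
    using const that by (intro maximizers_eq_self) blast
  then have "v + t *\<^sub>R u \<in> icell F J v"
    using t by (simp add: icell_def)
  then show "u = 0"
    using v t by simp
qed

lemma dim_le_sum_card_argmx_at_vertex:
  fixes F :: "nat \<Rightarrow> 'd::finite tpoly"
  assumes J: "finite J" and tp: "\<And>i. i \<in> J \<Longrightarrow> is_tpoly (F i)" and v: "icell F J v = {v}"
  shows "CARD('d) \<le> (\<Sum>i\<in>J. card (argmx (F i) v) - 1)"
proof (rule ccontr)
  assume "\<not> ?thesis"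
  then have "(\<Sum>i\<in>J. card (argmx (F i) v) - 1) < DIM(real^'d)"
    by simp
  moreover have "\<forall>i\<in>J. finite (argmx (F i) v)"
    using finite_argmx[OF tp] by blast
  ultimately obtain z :: "real^'d" where "z \<noteq> 0"
    and "\<forall>i\<in>J. \<forall>a\<in>argmx (F i) v. \<forall>b\<in>argmx (F i) v. a \<bullet> z = b \<bullet> z"
    using exists_direction_constant_on[OF J, of "\<lambda>i. argmx (F i) v"] by blast
  with constant_direction_at_vertex_eq_0[where F = F, OF J tp v] show False
    by blast
qed

lemma sum_card_argmx_le_dim:
  fixes F :: "nat \<Rightarrow> 'd::finite tpoly"
  assumes tp: "\<And>i. i \<in> J \<Longrightarrow> is_tpoly (F i)" and sm: "\<And>i. i \<in> J \<Longrightarrow> smooth_tpoly (F i)"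
    and tr: "aff_dim (convex hull (argmx (tprod F J) x)) = (\<Sum>i\<in>J. aff_dim (convex hull (argmx (F i) x)))"
  shows "(\<Sum>i\<in>J. card (argmx (F i) x) - 1) \<le> CARD('d)"
proof -
  have "aff_dim (convex hull (argmx (F i) x)) = int (card (argmx (F i) x) - 1)" if i: "i \<in> J" for i
  proof -
    have "card (argmx (F i) x) \<noteq> 0"
      using argmx_nonempty[OF tp[OF i]] finite_argmx[OF tp[OF i]] by simp
    then show ?thesis
      using aff_dim_affine_independent[OF affine_independent_argmx[OF tp[OF i] sm[OF i]]]
      by (simp add: aff_dim_convex_hull of_nat_diff)
  qed
  then have "int (\<Sum>i\<in>J. card (argmx (F i) x) - 1) = aff_dim (convex hull (argmx (tprod F J) x))"
    using tr by (simp add: of_nat_sum)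
  also have "\<dots> \<le> int CARD('d)"
    using aff_dim_le_DIM[of "convex hull (argmx (tprod F J) x)"] by simp
  finally show ?thesis
    by (simp only: of_nat_le_iff)
qed

lemma sum_pred_eq_card_Suc:
  fixes g :: "'i \<Rightarrow> nat"
  assumes J: "finite J" and ge2: "\<forall>i\<in>J. 2 \<le> g i" and sum: "(\<Sum>i\<in>J. g i - 1) = card J + 1"
  shows "\<exists>i0\<in>J. g i0 = 3 \<and> (\<forall>i\<in>J - {i0}. g i = 2)"
proof -
  have "(\<Sum>i\<in>J. g i - 1) = (\<Sum>i\<in>J. Suc (g i - 2))"
    using ge2 by (intro sum.cong) auto
  then have one: "(\<Sum>i\<in>J. g i - 2) = 1"
    using sum by (simp add: sum_Suc)
  then obtain i0 where i0: "i0 \<in> J" "g i0 - 2 \<noteq> 0"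
    by (metis sum.neutral zero_neq_one)
  have "(\<Sum>i\<in>J. g i - 2) = (g i0 - 2) + (\<Sum>i\<in>J - {i0}. g i - 2)"
    using J i0(1) by (rule sum.remove)
  then have "g i0 - 2 = 1" "(\<Sum>i\<in>J - {i0}. g i - 2) = 0"
    using one i0(2) by linarith+
  then have rest: "\<forall>i\<in>J - {i0}. g i - 2 = 0"
    using J by simp
  have "g i = 2" if "i \<in> J - {i0}" for i
  proof -
    have "g i - 2 = 0" "2 \<le> g i"
      using rest ge2 that by auto
    then show ?thesis
      by arith
  qed
  moreover have "g i0 = 3"
    using \<open>g i0 - 2 = 1\<close> by arith
  ultimately show ?thesis
    using i0(1) by blast
qed

lemma argmx_cards_at_vertex:
  fixes F :: "nat \<Rightarrow> 'd::finite tpoly"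
  assumes J: "finite J" and tp: "\<And>i. i \<in> J \<Longrightarrow> is_tpoly (F i)"
    and sm: "\<And>i. i \<in> J \<Longrightarrow> smooth_tpoly (F i)" and dim: "CARD('d) = card J + 1"
    and v: "v \<in> tinter F J" "icell F J v = {v}"
    and tr: "aff_dim (convex hull (argmx (tprod F J) v)) = (\<Sum>i\<in>J. aff_dim (convex hull (argmx (F i) v)))"
  shows "\<exists>i0\<in>J. card (argmx (F i0) v) = 3 \<and> (\<forall>i\<in>J - {i0}. card (argmx (F i) v) = 2)"
proof -
  have "(\<Sum>i\<in>J. card (argmx (F i) v) - 1) = card J + 1"
    using sum_card_argmx_le_dim[where F = F, OF tp sm tr]
      dim_le_sum_card_argmx_at_vertex[where F = F, OF J tp v(2)] dim by linarith
  moreover have "\<forall>i\<in>J. 2 \<le> card (argmx (F i) v)"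
    using v(1) Vtr_iff_card_argmx[OF tp] by (auto simp: tinter_def)
  ultimately show ?thesis
    using sum_pred_eq_card_Suc[OF J, of "\<lambda>i. card (argmx (F i) v)"] by blast
qed


subsection \<open>Edges at a vertex\<close>

definition argmx_cell :: "(nat \<Rightarrow> ('d::finite) tpoly) \<Rightarrow> nat set \<Rightarrow> (nat \<Rightarrow> (real^'d) set) \<Rightarrow> (real^'d) set"
  where "argmx_cell F J B = {x. \<forall>i\<in>J. B i \<subseteq> argmx (F i) x}"

context
  fixes F :: "nat \<Rightarrow> 'd::finite tpoly" and J :: "nat set" and v :: "real^'d" and i0 :: nat
  assumes J: "finite J" and tp: "\<And>i. i \<in> J \<Longrightarrow> is_tpoly (F i)" and dim: "CARD('d) = card J + 1"
    and v: "icell F J v = {v}" and i0: "i0 \<in> J" "card (argmx (F i0) v) = 3"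
    and two: "\<forall>i\<in>J - {i0}. card (argmx (F i) v) = 2"
begin

lemma exists_edge_direction:
  assumes T: "argmx (F i0) v = insert t T" "card T = 2"
  shows "\<exists>z s. z \<noteq> 0 \<and> s \<in> T \<and> (\<forall>a\<in>T. a \<bullet> z = s \<bullet> z) \<and> t \<bullet> z \<noteq> s \<bullet> z \<and>
    (\<forall>i\<in>J - {i0}. \<forall>a\<in>argmx (F i) v. \<forall>b\<in>argmx (F i) v. a \<bullet> z = b \<bullet> z)"
proof -
  define A where "A i = argmx (F i) v" for i
  define B where "B = A(i0 := T)"
  have "(\<Sum>i\<in>J. card (B i) - 1) = (\<Sum>i\<in>J. 1)"
    using two T(2) by (intro sum.cong) (auto simp: B_def A_def)
  then have "(\<Sum>i\<in>J. card (B i) - 1) < DIM(real^'d)"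
    using dim by simp
  moreover have "finite T"
    using T(2) by (intro card_ge_0_finite) simp
  then have "\<forall>i\<in>J. finite (B i)"
    using finite_argmx[OF tp] by (simp add: B_def A_def)
  ultimately obtain z :: "real^'d" where z: "z \<noteq> 0"
    and zB: "\<forall>i\<in>J. \<forall>a\<in>B i. \<forall>b\<in>B i. a \<bullet> z = b \<bullet> z"
    using exists_direction_constant_on[OF J] by blast
  have "T \<noteq> {}"
    using T(2) by auto
  then obtain s where s: "s \<in> T"
    by blast
  have "\<forall>a\<in>T. \<forall>b\<in>T. a \<bullet> z = b \<bullet> z"
    using zB i0 unfolding B_def by (metis fun_upd_same)
  then have zT: "\<forall>a\<in>T. a \<bullet> z = s \<bullet> z"
    using s by blast
  have zA: "\<forall>i\<in>J - {i0}. \<forall>a\<in>A i. \<forall>b\<in>A i. a \<bullet> z = b \<bullet> z"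
  proof (intro ballI)
    fix i a b
    assume i: "i \<in> J - {i0}" and ab: "a \<in> A i" "b \<in> A i"
    then have "B i = A i"
      by (simp add: B_def)
    then show "a \<bullet> z = b \<bullet> z"
      using zB i ab by blast
  qed
  have "t \<bullet> z \<noteq> s \<bullet> z"
  proof
    assume ts: "t \<bullet> z = s \<bullet> z"
    have "a \<bullet> z = b \<bullet> z" if i: "i \<in> J" and ab: "a \<in> A i" "b \<in> A i" for i a b
    proof (cases "i = i0")
      case True
      then have "a \<in> insert t T" "b \<in> insert t T"
        using ab T(1) by (simp_all add: A_def)
      then have "a \<bullet> z = s \<bullet> z" "b \<bullet> z = s \<bullet> z"
        using ts zT by (metis insert_iff)+
      then show ?thesis
        by simp
    next
      case False
      then show ?thesis
        using zA i ab by blast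
    qed
    then show False
      using constant_direction_at_vertex_eq_0[where F = F, OF J tp v] z unfolding A_def by blast
  qed
  then show ?thesis
    using z s zT zA unfolding A_def by blast
qed

lemma exists_point_leaving_vertex:
  assumes T: "T \<subseteq> argmx (F i0) v" "card T = 2"
  shows "\<exists>y. y \<noteq> v \<and> y \<in> tinter F J \<and> icell F J y = argmx_cell F J ((\<lambda>i. argmx (F i) v)(i0 := T))
    \<and> argmx (F i0) y = T"
proof -
  define B where "B = (\<lambda>i. argmx (F i) v)(i0 := T)"
  have "card (argmx (F i0) v - T) = 1"
    using T i0(2) finite_argmx[OF tp[OF i0(1)]] by (simp add: card_Diff_subset finite_subset)
  then obtain t where "argmx (F i0) v - T = {t}"
    by (rule card_1_singletonE)
  then have t: "argmx (F i0) v = insert t T"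
    using T(1) by auto
  obtain z s where z: "z \<noteq> 0" and zs: "s \<in> T" "\<forall>a\<in>T. a \<bullet> z = s \<bullet> z" "t \<bullet> z \<noteq> s \<bullet> z"
    and zconst: "\<forall>i\<in>J - {i0}. \<forall>a\<in>argmx (F i) v. \<forall>b\<in>argmx (F i) v. a \<bullet> z = b \<bullet> z"
    using exists_edge_direction[OF t T(2)] by blast
  define u where "u = (if t \<bullet> z < s \<bullet> z then z else - z)"
  have u: "u \<noteq> 0" "t \<bullet> u < s \<bullet> u"
    using z zs(3) by (auto simp: u_def)
  have uT: "\<forall>a\<in>T. a \<bullet> u = s \<bullet> u"
    using zs(2) by (simp add: u_def)
  have const: "\<forall>i\<in>J - {i0}. \<forall>a\<in>argmx (F i) v. \<forall>b\<in>argmx (F i) v. a \<bullet> u = b \<bullet> u"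
  proof (intro ballI)
    fix i a b
    assume "i \<in> J - {i0}" "a \<in> argmx (F i) v" "b \<in> argmx (F i) v"
    then have "a \<bullet> z = b \<bullet> z"
      using zconst by blast
    then show "a \<bullet> u = b \<bullet> u"
      by (simp add: u_def)
  qed
  have "maximizers (argmx (F i) v) u = B i" if "i \<in> J" for i
  proof (cases "i = i0")
    case True
    then show ?thesis
      using maximizers_insert_below[OF uT zs(1) u(2)] t by (simp add: B_def)
  next
    case False
    then have "maximizers (argmx (F i) v) u = argmx (F i) v"
      using const that by (intro maximizers_eq_self) blast
    with False show ?thesis
      by (simp add: B_def)
  qed
  moreover obtain \<tau> where \<tau>: "\<tau> > 0" "\<forall>i\<in>J. argmx (F i) (v + \<tau> *\<^sub>R u) = maximizers (argmx (F i) v) u"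
    using exists_argmx_along_ray[where F = F, OF J tp] by blast
  ultimately have y: "\<forall>i\<in>J. argmx (F i) (v + \<tau> *\<^sub>R u) = B i"
    by simp
  have "2 \<le> card (B i)" if "i \<in> J" for i
    using two T(2) that by (simp add: B_def)
  then have "v + \<tau> *\<^sub>R u \<in> tinter F J"
    using y Vtr_iff_card_argmx[OF tp] by (simp add: tinter_def)
  moreover have "v + \<tau> *\<^sub>R u \<noteq> v"
    using u(1) \<tau>(1) by simp
  moreover have "icell F J (v + \<tau> *\<^sub>R u) = argmx_cell F J B"
    using y by (simp add: icell_def argmx_cell_def)
  moreover have "argmx (F i0) (v + \<tau> *\<^sub>R u) = T"
    using y i0(1) by (simp add: B_def)
  ultimately show ?thesis
    unfolding B_def by blast
qed

lemma argmx_on_cell_through_vertex: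
  assumes x: "x \<in> tinter F J" "v \<in> icell F J x" "icell F J x \<noteq> {v}"
  shows "\<forall>i\<in>J - {i0}. argmx (F i) x = argmx (F i) v"
    and "argmx (F i0) x \<subseteq> argmx (F i0) v" "card (argmx (F i0) x) = 2"
proof -
  have sub: "argmx (F i) x \<subseteq> argmx (F i) v" if "i \<in> J" for i
    using x(2) that by (auto simp: icell_def)
  have fin: "finite (argmx (F i) v)" if "i \<in> J" for i
    using finite_argmx[OF tp[OF that]] .
  have ge2: "2 \<le> card (argmx (F i) x)" if "i \<in> J" for i
    using x(1) Vtr_iff_card_argmx[OF tp[OF that]] that by (auto simp: tinter_def)
  show eq: "\<forall>i\<in>J - {i0}. argmx (F i) x = argmx (F i) v"
  proof
    fix i
    assume i: "i \<in> J - {i0}"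
    show "argmx (F i) x = argmx (F i) v"
    proof (rule card_seteq[OF fin sub])
      show "card (argmx (F i) v) \<le> card (argmx (F i) x)"
        using ge2 two i by simp
    qed (use i in auto)
  qed
  show "argmx (F i0) x \<subseteq> argmx (F i0) v"
    using sub i0(1) .
  have "argmx (F i0) x \<noteq> argmx (F i0) v"
  proof
    assume "argmx (F i0) x = argmx (F i0) v"
    then have "\<forall>i\<in>J. argmx (F i) x = argmx (F i) v"
      using eq by auto
    then have "icell F J x = icell F J v"
      by (simp add: icell_def)
    with v x(3) show False
      by simp
  qed
  then have "card (argmx (F i0) x) \<noteq> 3"
    using card_seteq[OF fin[OF i0(1)] sub[OF i0(1)]] i0(2) by auto
  moreover have "card (argmx (F i0) x) \<le> 3"
    using card_mono[OF fin[OF i0(1)] sub[OF i0(1)]] i0(2) by simp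
  ultimately show "card (argmx (F i0) x) = 2"
    using ge2[OF i0(1)] by simp
qed

lemma edges_at_vertex_eq_pair_cells:
  assumes cells: "\<forall>C\<in>icells F J. aff_dim C \<le> 1"
  shows "{E \<in> icells F J. aff_dim E = 1 \<and> v \<in> E} =
    (\<lambda>T. argmx_cell F J ((\<lambda>i. argmx (F i) v)(i0 := T))) ` {T. T \<subseteq> argmx (F i0) v \<and> card T = 2}"
proof (intro set_eqI iffI)
  fix E
  assume "E \<in> {E \<in> icells F J. aff_dim E = 1 \<and> v \<in> E}"
  then obtain x where x: "x \<in> tinter F J" "E = icell F J x" and E: "aff_dim E = 1" "v \<in> E"
    by (auto simp: icells_def)
  have vx: "v \<in> icell F J x"
    using E(2) x(2) by simp
  have "icell F J x \<noteq> {v}"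
    using E(1) x(2) by (metis aff_dim_sing zero_neq_one)
  note profile = argmx_on_cell_through_vertex[OF x(1) vx this]
  have "E = argmx_cell F J ((\<lambda>i. argmx (F i) v)(i0 := argmx (F i0) x))"
    using x(2) profile(1) i0(1) by (auto simp: icell_def argmx_cell_def)
  then show "E \<in> (\<lambda>T. argmx_cell F J ((\<lambda>i. argmx (F i) v)(i0 := T))) `
      {T. T \<subseteq> argmx (F i0) v \<and> card T = 2}"
    using profile(2,3) by blast
next
  fix E
  assume "E \<in> (\<lambda>T. argmx_cell F J ((\<lambda>i. argmx (F i) v)(i0 := T))) `
    {T. T \<subseteq> argmx (F i0) v \<and> card T = 2}"
  then obtain T where T: "T \<subseteq> argmx (F i0) v" "card T = 2"
    and E: "E = argmx_cell F J ((\<lambda>i. argmx (F i) v)(i0 := T))"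
    by blast
  then obtain y where y: "y \<noteq> v" "y \<in> tinter F J" "icell F J y = E"
    using exists_point_leaving_vertex by blast
  have "v \<in> E"
    using T E by (auto simp: argmx_cell_def)
  have "y \<in> icell F J y"
    by (simp add: icell_def)
  then have "y \<in> E"
    using y(3) by simp
  then have "1 \<le> aff_dim E"
    using aff_dim_subset[of "{v, y}" E] y(1) \<open>v \<in> E\<close> by simp
  moreover have "E \<in> icells F J"
    using y by (auto simp: icells_def)
  moreover have "aff_dim E \<le> 1"
    using cells \<open>E \<in> icells F J\<close> by blast
  ultimately show "E \<in> {E \<in> icells F J. aff_dim E = 1 \<and> v \<in> E}"
    using \<open>v \<in> E\<close> by simp
qed

lemma inj_on_pair_cells:
  "inj_on (\<lambda>T. argmx_cell F J ((\<lambda>i. argmx (F i) v)(i0 := T))) {T. T \<subseteq> argmx (F i0) v \<and> card T = 2}"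
proof (rule inj_onI)
  fix T T'
  assume T: "T \<in> {T. T \<subseteq> argmx (F i0) v \<and> card T = 2}" "T' \<in> {T. T \<subseteq> argmx (F i0) v \<and> card T = 2}"
    and eq: "argmx_cell F J ((\<lambda>i. argmx (F i) v)(i0 := T)) = argmx_cell F J ((\<lambda>i. argmx (F i) v)(i0 := T'))"
  obtain y where y: "icell F J y = argmx_cell F J ((\<lambda>i. argmx (F i) v)(i0 := T))" "argmx (F i0) y = T"
    using exists_point_leaving_vertex T(1) by blast
  have "y \<in> icell F J y"
    by (simp add: icell_def)
  then have "y \<in> argmx_cell F J ((\<lambda>i. argmx (F i) v)(i0 := T'))"
    using eq y(1) by simp
  then have "T' \<subseteq> T"
    using i0(1) y(2) unfolding argmx_cell_def by fastforce
  then show "T = T'"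
    using T card_seteq[of T T'] card_ge_0_finite[of T] by auto
qed

lemma card_edges_at_vertex:
  assumes "\<forall>C\<in>icells F J. aff_dim C \<le> 1"
  shows "card {E \<in> icells F J. aff_dim E = 1 \<and> v \<in> E} = 3"
proof -
  have "card {T. T \<subseteq> argmx (F i0) v \<and> card T = 2} = 3"
    using n_subsets[OF finite_argmx[OF tp[OF i0(1)], of v], of 2] i0(2) by (simp add: choose_two)
  then show ?thesis
    using edges_at_vertex_eq_pair_cells[OF assms] inj_on_pair_cells by (simp add: card_image)
qed

end


theorem lemma3p1:
  fixes F :: "nat \<Rightarrow> 'd::finite tpoly" and n :: nat
  assumes "2 \<le> n"
    and "CARD('d) = n + 1"
    and "\<forall>i\<in>{1..n}. is_tpoly (F i)"
    and "\<forall>i\<in>{1..n}. smooth_tpoly (F i)"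
    and "transversal F n"
    and "v \<in> curve_vertices F n"
  shows "card {E \<in> curve_edges F n. v \<in> E} = 3"
proof -
  define J where "J = {1..n}"
  have J: "finite J" and dim: "CARD('d) = card J + 1" and trJ: "J \<subseteq> {1..n} \<and> 2 \<le> card J"
    using assms(1,2) by (simp_all add: J_def)
  have tp: "\<And>i. i \<in> J \<Longrightarrow> is_tpoly (F i)" and sm: "\<And>i. i \<in> J \<Longrightarrow> smooth_tpoly (F i)"
    using assms(3,4) by (simp_all add: J_def)
  have "{v} \<in> icells F J"
    using assms(6) by (simp add: curve_vertices_def J_def)
  note v = singleton_icellsD[OF this]
  have "aff_dim (convex hull (argmx (tprod F J) v)) = (\<Sum>i\<in>J. aff_dim (convex hull (argmx (F i) v)))"
    using assms(5) trJ v(1) unfolding transversal_def by blast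
  then obtain i0 where i0: "i0 \<in> J" "card (argmx (F i0) v) = 3"
    and two: "\<forall>i\<in>J - {i0}. card (argmx (F i) v) = 2"
    using argmx_cards_at_vertex[where F = F, OF J tp sm dim v] by blast
  have "\<forall>C\<in>icells F J. aff_dim C \<le> int CARD('d) - int (card J)"
    using assms(5) trJ unfolding transversal_def by blast
  then have "\<forall>C\<in>icells F J. aff_dim C \<le> 1"
    using dim by simp
  from card_edges_at_vertex[where F = F, OF J tp dim v(2) i0 two this]
  show ?thesis
    by (simp add: curve_edges_def J_def conj_commute)
qed

end
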